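(* Let $K\ge2$ and let $C_1,\dots,C_{K-1}>0$. Let $\Phi$ be the cumulative distribution function of the standard normal distribution. Then the function $f:\mathbb{R}^K\to\mathbb{R}$, $f(\vec{x})=\sum_{i=1}^{K-1}\Phi(C_ix_i-C_ix_K)$, is convex on the domain $D=\{\vec{x}\in\mathbb{R}^K: x_i-x_K\le 0\ \forall i<K\}$. *)

theory Defs
  imports "HOL-Probability.Probability"
begin

definition Phi :: "real \<Rightarrow> real" where
  "Phi t = (LBINT x:{..t}. std_normal_density x)"

text \<open>Vectors in R^K are represented as functions nat => real indexed by 1..K
  (coordinates outside 1..K are required to be 0).\<close>
definition vecK :: "nat \<Rightarrow> (nat \<Rightarrow> real) set" where
  "vecK K = {x. \<forall>i. i \<notin> {1..K} \<longrightarrow> x i = 0}"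

text \<open>Convexity of a real function on a set of such vectors, literally the library
  definition convex_on with pointwise vector operations.\<close>
definition convex_on_fun :: "(nat \<Rightarrow> real) set \<Rightarrow> ((nat \<Rightarrow> real) \<Rightarrow> real) \<Rightarrow> bool" where
  "convex_on_fun S f \<longleftrightarrow>
     (\<forall>x\<in>S. \<forall>y\<in>S. \<forall>u\<ge>0. \<forall>v\<ge>0. u + v = 1 \<longrightarrow> (\<lambda>i. u * x i + v * y i) \<in> S) \<and>
     (\<forall>x\<in>S. \<forall>y\<in>S. \<forall>u\<ge>0. \<forall>v\<ge>0. u + v = 1 \<longrightarrow>
        f (\<lambda>i. u * x i + v * y i) \<le> u * f x + v * f y)"

end

theory Submission
  imports Defs
begin

text \<open>Each summand is \<open>\<Phi>\<close> composed with the affine form \<open>x \<mapsto> C\<^sub>i (x\<^sub>i - x\<^sub>K)\<close>, which maps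
  the domain into \<open>(-\<infinity>, 0]\<close>. There \<open>\<Phi>\<close> is convex, because its derivative, the Gaussian
  density, is increasing on \<open>(-\<infinity>, 0]\<close>. Convexity is preserved by precomposition with
  affine maps and by finite sums.\<close>

lemma has_real_derivative_LBINT_atMost:
  fixes f :: "real \<Rightarrow> real"
  assumes int: "integrable lborel f" and cont: "continuous_on UNIV f"
  shows "((\<lambda>t. LBINT x:{..t}. f x) has_real_derivative f t) (at t)"
proof -
  have "interval_lebesgue_integrable lborel a b f" for a b
    using int unfolding interval_lebesgue_integrable_def set_integrable_def
    by (auto intro!: integrable_real_mult_indicator simp: mult.commute)
  then have split: "(LBINT x:{..u}. f x) = (LBINT x=-\<infinity>..0. f x) + (LBINT x=0..u. f x)" for u
    using interval_integral_Icc'[of "-\<infinity>" "ereal u" f]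
    by (simp add: interval_integral_sum zero_ereal_def atMost_def)
  define a b where "a = min 0 (t - 1)" and "b = max 0 (t + 1)"
  have "a < t" "t < b"
    by (simp_all add: a_def b_def)
  have "((\<lambda>u. LBINT x=0..u. f x) has_vector_derivative f t) (at t within {a..b})"
    using interval_integral_FTC2[of a 0 b f t] continuous_on_subset[OF cont] \<open>a < t\<close> \<open>t < b\<close>
    by (simp add: a_def b_def zero_ereal_def)
  moreover have "at t within {a..b} = at t"
    using \<open>a < t\<close> \<open>t < b\<close> by (intro at_within_interior) simp
  ultimately have "((\<lambda>u. LBINT x=0..u. f x) has_real_derivative f t) (at t)"
    by (simp add: has_real_derivative_iff_has_vector_derivative)
  then show ?thesis
    unfolding split using DERIV_add[OF DERIV_const] by fastforce
qed

lemma Phi_has_real_derivative: "(Phi has_real_derivative std_normal_density t) (at t)"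
  unfolding Phi_def
  by (rule has_real_derivative_LBINT_atMost[OF integrable_normal_density])
     (auto simp: std_normal_density_def intro!: continuous_intros)

lemma std_normal_density_mono_nonpos:
  assumes "x \<le> y" "y \<le> 0"
  shows "std_normal_density x \<le> std_normal_density y"
proof -
  have "(-y) * (-y) \<le> (-x) * (-x)"
    using assms by (intro mult_mono) auto
  then have "y\<^sup>2 \<le> x\<^sup>2"
    by (simp add: power2_eq_square)
  then have "exp (- x\<^sup>2 / 2) \<le> exp (- y\<^sup>2 / 2)"
    by simp
  then show ?thesis
    unfolding std_normal_density_def by (rule mult_left_mono) simp
qed

lemma convex_on_Phi_nonpos: "convex_on {..0} Phi"
  by (rule convex_on_realI[OF _ Phi_has_real_derivative std_normal_density_mono_nonpos]) auto

definition convex_fun_set :: "(nat \<Rightarrow> real) set \<Rightarrow> bool" where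
  "convex_fun_set S \<longleftrightarrow>
     (\<forall>x\<in>S. \<forall>y\<in>S. \<forall>u\<ge>0. \<forall>v\<ge>0. u + v = 1 \<longrightarrow> (\<lambda>i. u * x i + v * y i) \<in> S)"

lemma convex_on_funI:
  assumes "convex_fun_set S"
    and "\<And>x y u v. x \<in> S \<Longrightarrow> y \<in> S \<Longrightarrow> u \<ge> 0 \<Longrightarrow> v \<ge> 0 \<Longrightarrow> u + v = 1 \<Longrightarrow>
           f (\<lambda>i. u * x i + v * y i) \<le> u * f x + v * f y"
  shows "convex_on_fun S f"
  using assms unfolding convex_on_fun_def convex_fun_set_def by blast

lemma convex_on_funD:
  assumes "convex_on_fun S f" "x \<in> S" "y \<in> S" "u \<ge> 0" "v \<ge> 0" "u + v = 1"
  shows "f (\<lambda>i. u * x i + v * y i) \<le> u * f x + v * f y"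
  using assms unfolding convex_on_fun_def by blast

lemma convex_on_fun_sum:
  assumes "convex_fun_set S" and "\<And>j. j \<in> J \<Longrightarrow> convex_on_fun S (f j)"
  shows "convex_on_fun S (\<lambda>x. \<Sum>j\<in>J. f j x)"
proof (rule convex_on_funI[OF assms(1)])
  fix x y :: "nat \<Rightarrow> real" and u v :: real
  assume "x \<in> S" "y \<in> S" "u \<ge> 0" "v \<ge> 0" "u + v = 1"
  then show "(\<Sum>j\<in>J. f j (\<lambda>i. u * x i + v * y i)) \<le> u * (\<Sum>j\<in>J. f j x) + v * (\<Sum>j\<in>J. f j y)"
    unfolding sum_distrib_left sum.distrib[symmetric]
    by (intro sum_mono convex_on_funD[OF assms(2)])
qed

lemma convex_on_fun_compose_affine:
  assumes "convex_fun_set S" and "convex_on T g" and "\<And>x. x \<in> S \<Longrightarrow> L x \<in> T"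
    and "\<And>x y u v. u + v = 1 \<Longrightarrow> L (\<lambda>i. u * x i + v * y i) = u * L x + v * L y"
  shows "convex_on_fun S (\<lambda>x. g (L x))"
  using assms unfolding convex_on_def by (intro convex_on_funI) auto

lemma convex_fun_set_vecK_halfspaces:
  "convex_fun_set {x \<in> vecK K. \<forall>i\<in>I. x i - x k \<le> 0}"
  unfolding convex_fun_set_def vecK_def
proof (safe)
  fix x y :: "nat \<Rightarrow> real" and u v :: real and i
  assume "\<forall>i\<in>I. x i - x k \<le> 0" "\<forall>i\<in>I. y i - y k \<le> 0" "u \<ge> 0" "v \<ge> 0" "i \<in> I"
  then have "u * (x i - x k) + v * (y i - y k) \<le> 0"
    by (simp add: add_nonpos_nonpos mult_nonneg_nonpos)
  then show "u * x i + v * y i - (u * x k + v * y k) \<le> 0"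
    by (simp add: algebra_simps)
qed auto

theorem lemma2:
  fixes K :: nat and C :: "nat \<Rightarrow> real"
  assumes "K \<ge> 2"
    and "\<And>i. i \<in> {1..K-1} \<Longrightarrow> C i > 0"
  shows "convex_on_fun {x \<in> vecK K. \<forall>i\<in>{1..K-1}. x i - x K \<le> 0}
           (\<lambda>x. \<Sum>i=1..K-1. Phi (C i * x i - C i * x K))"
proof (rule convex_on_fun_sum[OF convex_fun_set_vecK_halfspaces])
  fix i assume i: "i \<in> {1..K-1}"
  show "convex_on_fun {x \<in> vecK K. \<forall>i\<in>{1..K-1}. x i - x K \<le> 0} (\<lambda>x. Phi (C i * x i - C i * x K))"
  proof (rule convex_on_fun_compose_affine[OF convex_fun_set_vecK_halfspaces convex_on_Phi_nonpos])
    fix x assume "x \<in> {x \<in> vecK K. \<forall>i\<in>{1..K-1}. x i - x K \<le> 0}"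
    then have "C i * (x i - x K) \<le> 0"
      using i assms(2)[OF i] by (simp add: mult_nonneg_nonpos)
    then show "C i * x i - C i * x K \<in> {..0}"
      by (simp add: right_diff_distrib)
  next
    fix x y :: "nat \<Rightarrow> real" and u v :: real assume "u + v = 1"
    then show "C i * (u * x i + v * y i) - C i * (u * x K + v * y K)
        = u * (C i * x i - C i * x K) + v * (C i * y i - C i * y K)"
      by (simp add: algebra_simps)
  qed
qed

end
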